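(* Let $(X,\mathcal{A})$ be a measurable space, $f,g\in\mathcal{F}_{[0,1]}^{(X,\mathcal{A})}$ comonotone, and $\star:[0,1]^2\to[0,1]$ continuous, non-decreasing in both arguments and bounded from below by the maximum ($a\star b\ge\max(a,b)$). Then for every monotone measure $m$ on $(X,\mathcal{A})$ with $m(X)=1$ and all $\alpha,\beta,\gamma,\lambda,\upsilon,\tau\in(0,\infty)$ with $1\le\alpha\lambda<\infty$, $0<\beta\upsilon\le1$, $0<\gamma\tau\le1$, $\lambda\ge\tau$ and $\lambda\ge\upsilon$, \[ \big[\mathbf{Su}(m,(f\star g)^{\alpha})\big]^{\lambda}\ \le\ \big[\mathbf{Su}(m,f^{\beta})\big]^{\upsilon}\star\big[\mathbf{Su}(m,g^{\gamma})\big]^{\tau}. \]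
   Context: A monotone measure on $(X,\mathcal{A})$ is $m:\mathcal{A}\to[0,\infty]$ with $m(\emptyset)=0$, $m(X)>0$, $m(A)\le m(B)$ for $A\subseteq B$. $\mathcal{F}_{[0,1]}^{(X,\mathcal{A})}$ is the set of $\mathcal{A}$-measurable $f:X\to[0,1]$. The Sugeno integral is $\mathbf{Su}(m,f)=\sup\{\min(t,m(\{f\ge t\})) : t\in(0,\infty]\}$. $f,g$ are comonotone if $(f(x)-f(y))(g(x)-g(y))\ge0$ for all $x,y$. Operations on functions are pointwise. *)

theory Defs
  imports "HOL-Analysis.Analysis"
begin

definition monotone_measure :: "'a measure \<Rightarrow> ('a set \<Rightarrow> ennreal) \<Rightarrow> bool" where
  "monotone_measure M m \<longleftrightarrow>
     m {} = 0 \<and> m (space M) > 0 \<and>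
     (\<forall>A\<in>sets M. \<forall>B\<in>sets M. A \<subseteq> B \<longrightarrow> m A \<le> m B)"

definition F01 :: "'a measure \<Rightarrow> ('a \<Rightarrow> real) set" where
  "F01 M = {f. f \<in> borel_measurable M \<and> (\<forall>x\<in>space M. 0 \<le> f x \<and> f x \<le> 1)}"

definition sugeno :: "'a measure \<Rightarrow> ('a set \<Rightarrow> ennreal) \<Rightarrow> ('a \<Rightarrow> real) \<Rightarrow> ennreal" where
  "sugeno M m f = (SUP t\<in>{0<..}. min t (m {x\<in>space M. t \<le> ennreal (f x)}))"

definition comonotone :: "'a measure \<Rightarrow> ('a \<Rightarrow> real) \<Rightarrow> ('a \<Rightarrow> real) \<Rightarrow> bool" where
  "comonotone M f g \<longleftrightarrow> (\<forall>x\<in>space M. \<forall>y\<in>space M. (f x - f y) * (g x - g y) \<ge> 0)"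

end

theory Submission
  imports Defs
begin

text \<open>
  Put \<open>a = Su(f^\<beta>)\<close>, \<open>b = Su(g^\<gamma>)\<close>, \<open>x\<^sub>0 = a^(1/\<beta>)\<close> and \<open>y\<^sub>0 = b^(1/\<gamma>)\<close>. Every level set
  \<open>{f \<ge> p}\<close> with \<open>p > x\<^sub>0\<close> has measure at most \<open>a\<close>, and likewise for \<open>g\<close>. For a level
  \<open>s > x\<^sub>0 \<star> y\<^sub>0\<close>, continuity of \<open>\<star>\<close> yields such \<open>p, q\<close> with \<open>p \<star> q < s\<close>, so monotonicity gives
  \<open>{f \<star> g \<ge> s} \<subseteq> {f \<ge> p} \<union> {g \<ge> q}\<close>; comonotonicity makes these two level sets nested, so the
  union has measure at most \<open>max a b\<close>. Hence \<open>Su((f \<star> g)^\<alpha>) \<le> max (max a b) ((x\<^sub>0 \<star> y\<^sub>0)^\<alpha>)\<close>,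
  and the exponent conditions bound the \<open>\<lambda>\<close>-th power of each term by \<open>a^\<upsilon> \<star> b^\<tau>\<close>, using
  \<open>\<star> \<ge> max\<close> for the first two.
\<close>

lemma powr_le_powr_iff:
  fixes x y a :: real
  assumes "0 \<le> x" and "0 \<le> y" and "0 < a"
  shows "x powr a \<le> y powr a \<longleftrightarrow> x \<le> y"
  using assms by (meson not_le powr_less_mono2 powr_mono2 less_imp_le)

lemma sugeno_le_ennreal_iff:
  assumes "m {} = 0" and "0 \<le> c"
  shows "sugeno M m h \<le> ennreal c \<longleftrightarrow> (\<forall>s>c. m {x\<in>space M. s \<le> h x} \<le> ennreal c)"
proof
  assume le: "sugeno M m h \<le> ennreal c"
  show "\<forall>s>c. m {x\<in>space M. s \<le> h x} \<le> ennreal c"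
  proof (intro allI impI)
    fix s assume "c < s"
    have "min (ennreal s) (m {x\<in>space M. ennreal s \<le> ennreal (h x)}) \<le> sugeno M m h"
      unfolding sugeno_def using \<open>c < s\<close> assms(2) by (intro SUP_upper) simp
    also note le
    also have "{x\<in>space M. ennreal s \<le> ennreal (h x)} = {x\<in>space M. s \<le> h x}"
      using \<open>c < s\<close> assms(2) by (auto simp: ennreal_le_iff2)
    finally have "min (ennreal s) (m {x\<in>space M. s \<le> h x}) \<le> ennreal c" .
    moreover have "ennreal c < ennreal s"
      using \<open>c < s\<close> assms(2) by (simp add: ennreal_less_iff)
    ultimately show "m {x\<in>space M. s \<le> h x} \<le> ennreal c"
      unfolding min_le_iff_disj using leD by blast
  qed
next
  assume levels: "\<forall>s>c. m {x\<in>space M. s \<le> h x} \<le> ennreal c"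
  show "sugeno M m h \<le> ennreal c"
    unfolding sugeno_def
  proof (rule SUP_least)
    fix t :: ennreal
    show "min t (m {x \<in> space M. t \<le> ennreal (h x)}) \<le> ennreal c"
    proof (cases t)
      case (real s)
      show ?thesis
      proof (cases "s \<le> c")
        case True
        then show ?thesis unfolding real by (intro min.coboundedI1 ennreal_leI)
      next
        case False
        have "{x \<in> space M. ennreal s \<le> ennreal (h x)} = {x\<in>space M. s \<le> h x}"
          using False assms(2) by (auto simp: ennreal_le_iff2)
        moreover have "m {x\<in>space M. s \<le> h x} \<le> ennreal c"
          using False by (intro levels[rule_format]) simp
        ultimately show ?thesis unfolding real by (simp add: min.coboundedI2)
      qed
    next
      case top
      then have empty: "{x \<in> space M. t \<le> ennreal (h x)} = {}" by (auto simp: top_unique)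
      show ?thesis unfolding empty using assms(1) by simp
    qed
  qed
qed

lemma sugeno_le_1:
  assumes "m {} = 0" and "\<And>x. x \<in> space M \<Longrightarrow> h x \<le> 1"
  shows "sugeno M m h \<le> 1"
proof -
  have "\<forall>s>1. m {x\<in>space M. s \<le> h x} \<le> ennreal 1"
  proof (intro allI impI)
    fix s :: real assume "1 < s"
    then have empty: "{x\<in>space M. s \<le> h x} = {}" using assms(2) by force
    show "m {x\<in>space M. s \<le> h x} \<le> ennreal 1" unfolding empty using assms(1) by simp
  qed
  then show ?thesis using sugeno_le_ennreal_iff[of m 1 M h] assms(1) by simp
qed

lemma sugeno_powr_eq_ennreal_enn2real:
  assumes "m {} = 0" and "h \<in> F01 M" and "0 < p"
  shows "sugeno M m (\<lambda>x. h x powr p) = ennreal (enn2real (sugeno M m (\<lambda>x. h x powr p)))"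
    and "enn2real (sugeno M m (\<lambda>x. h x powr p)) \<in> {0..1}"
proof -
  have "sugeno M m (\<lambda>x. h x powr p) \<le> 1"
    using assms unfolding F01_def by (intro sugeno_le_1 powr_le1) auto
  then show "sugeno M m (\<lambda>x. h x powr p) = ennreal (enn2real (sugeno M m (\<lambda>x. h x powr p)))"
    "enn2real (sugeno M m (\<lambda>x. h x powr p)) \<in> {0..1}"
    by (auto simp: enn2real_leI order_le_less_trans[OF _ ennreal_less_top[of 1], simplified])
qed

lemma level_le_sugeno_powr:
  assumes "m {} = 0" and "0 < \<beta>" and "\<And>x. x \<in> space M \<Longrightarrow> 0 \<le> f x"
    and "sugeno M m (\<lambda>x. f x powr \<beta>) \<le> ennreal a" and "0 \<le> a" and "a powr (1 / \<beta>) < p"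
  shows "m {x\<in>space M. p \<le> f x} \<le> ennreal a"
proof -
  have "0 < p" using assms(6) powr_ge_zero[of a "1 / \<beta>"] by linarith
  have "a = (a powr (1 / \<beta>)) powr \<beta>" using assms(2,5) by (simp add: powr_powr)
  also have "\<dots> < p powr \<beta>" using assms(2,6) by (intro powr_less_mono2) auto
  finally have "m {x\<in>space M. p powr \<beta> \<le> f x powr \<beta>} \<le> ennreal a"
    using sugeno_le_ennreal_iff[of m a M "\<lambda>x. f x powr \<beta>", THEN iffD1, OF assms(1,5,4)] by simp
  moreover have "{x\<in>space M. p powr \<beta> \<le> f x powr \<beta>} = {x\<in>space M. p \<le> f x}"
    by (rule Collect_cong, rule conj_cong, rule refl, rule powr_le_powr_iff)
       (use \<open>0 < p\<close> assms(2,3) in auto)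
  ultimately show ?thesis by simp
qed

lemma comonotone_level_sets_nested:
  assumes "comonotone M f g"
  shows "{x\<in>space M. p \<le> f x} \<subseteq> {x\<in>space M. q \<le> g x} \<or> {x\<in>space M. q \<le> g x} \<subseteq> {x\<in>space M. p \<le> f x}"
proof (rule ccontr)
  assume "\<not> ?thesis"
  then obtain x y where "x \<in> space M" "y \<in> space M" "p \<le> f x" "g x < q" "q \<le> g y" "f y < p"
    by (auto simp: subset_iff not_le)
  then have "(f x - f y) * (g x - g y) < 0" by (intro mult_pos_neg) auto
  with assms \<open>x \<in> space M\<close> \<open>y \<in> space M\<close> show False
    unfolding comonotone_def by force
qed

lemma continuous_on_unit_square_less_above:
  fixes star :: "real \<Rightarrow> real \<Rightarrow> real"
  assumes cont: "continuous_on ({0..1} \<times> {0..1}) (\<lambda>(a, b). star a b)"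
    and x0: "x0 \<in> {0..<1}" and y0: "y0 \<in> {0..<1}" and "star x0 y0 < s"
  obtains p q where "x0 < p" "p \<le> 1" "y0 < q" "q \<le> 1" "star p q < s"
proof -
  have "(x0, y0) \<in> {0..1} \<times> {0..1}" using x0 y0 by auto
  moreover have "0 < s - star x0 y0" using \<open>star x0 y0 < s\<close> by simp
  ultimately obtain \<delta> where "\<delta> > 0" and \<delta>: "\<forall>z\<in>{0..1} \<times> {0..1}. dist z (x0, y0) < \<delta> \<longrightarrow>
      dist ((\<lambda>(a, b). star a b) z) ((\<lambda>(a, b). star a b) (x0, y0)) < s - star x0 y0"
    using cont[unfolded continuous_on_iff, rule_format] by blast
  define e where "e = min (\<delta> / 2) (min (1 - x0) (1 - y0))"
  have "0 < e" using \<open>\<delta> > 0\<close> x0 y0 by (simp add: e_def)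
  have "x0 + e \<le> 1" "y0 + e \<le> 1" by (simp_all add: e_def)
  have "\<delta> / 2 < \<delta> / sqrt 2"
    using \<open>\<delta> > 0\<close> sqrt2_less_2 by (intro divide_strict_left_mono) auto
  then have "e < \<delta> / sqrt 2" unfolding e_def by linarith
  then have "dist (x0 + e, y0 + e) (x0, y0) < \<delta>"
    unfolding dist_Pair_Pair dist_real_def using \<open>0 < e\<close> by (intro real_sqrt_sum_squares_less) auto
  moreover have "(x0 + e, y0 + e) \<in> {0..1} \<times> {0..1}"
    using x0 y0 \<open>0 < e\<close> \<open>x0 + e \<le> 1\<close> \<open>y0 + e \<le> 1\<close> by simp
  ultimately have "dist (star (x0 + e) (y0 + e)) (star x0 y0) < s - star x0 y0"
    using \<delta> by (metis case_prod_conv)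
  then have "star (x0 + e) (y0 + e) < s" unfolding dist_real_def by linarith
  with \<open>0 < e\<close> \<open>x0 + e \<le> 1\<close> \<open>y0 + e \<le> 1\<close> show ?thesis
    by (intro that[of "x0 + e" "y0 + e"]) simp_all
qed

lemma borel_measurable_continuous_on_unit_square:
  fixes star :: "real \<Rightarrow> real \<Rightarrow> real"
  assumes cont: "continuous_on ({0..1} \<times> {0..1}) (\<lambda>(a, b). star a b)"
    and f: "f \<in> F01 M" and g: "g \<in> F01 M"
  shows "(\<lambda>x. star (f x) (g x)) \<in> borel_measurable M"
proof -
  \<comment> \<open>\<open>star\<close> is only continuous on the square; clamping extends it continuously to the plane
    without changing its values at \<open>(f x, g x)\<close>.\<close>
  define clamp where "clamp = (\<lambda>u::real. max 0 (min 1 u))"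
  have "continuous_on UNIV (\<lambda>z::real \<times> real. (clamp (fst z), clamp (snd z)))"
    unfolding clamp_def by (intro continuous_intros)
  then have "continuous_on UNIV (\<lambda>z::real \<times> real. (\<lambda>(a, b). star a b) (clamp (fst z), clamp (snd z)))"
    by (rule continuous_on_compose2[OF cont]) (auto simp: clamp_def)
  then have "(\<lambda>x. star (clamp (f x)) (clamp (g x))) \<in> borel_measurable M"
    using f g unfolding F01_def
    by (intro borel_measurable_continuous_Pair[where H = "\<lambda>a b. star (clamp a) (clamp b)"]) auto
  moreover have "\<And>x. x \<in> space M \<Longrightarrow> star (clamp (f x)) (clamp (g x)) = star (f x) (g x)"
    using f g unfolding F01_def clamp_def by auto
  ultimately show ?thesis by (rule measurable_cong[THEN iffD1, rotated])
qed

lemma F01_continuous_on_unit_square: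
  fixes star :: "real \<Rightarrow> real \<Rightarrow> real"
  assumes "continuous_on ({0..1} \<times> {0..1}) (\<lambda>(a, b). star a b)"
    and "\<And>a b. a \<in> {0..1} \<Longrightarrow> b \<in> {0..1} \<Longrightarrow> star a b \<in> {0..1}"
    and "f \<in> F01 M" and "g \<in> F01 M"
  shows "(\<lambda>x. star (f x) (g x)) \<in> F01 M"
  using borel_measurable_continuous_on_unit_square[OF assms(1,3,4)] assms(2-4)
  unfolding F01_def by fastforce

lemma comonotone_star_level_le:
  fixes star :: "real \<Rightarrow> real \<Rightarrow> real"
  assumes m: "monotone_measure M m" and f: "f \<in> F01 M" and g: "g \<in> F01 M"
    and com: "comonotone M f g"
    and star_cont: "continuous_on ({0..1} \<times> {0..1}) (\<lambda>(a, b). star a b)"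
    and star_mono: "\<And>a a' b b'. a \<in> {0..1} \<Longrightarrow> a' \<in> {0..1} \<Longrightarrow> b \<in> {0..1} \<Longrightarrow> b' \<in> {0..1}
                     \<Longrightarrow> a \<le> a' \<Longrightarrow> b \<le> b' \<Longrightarrow> star a b \<le> star a' b'"
    and x0: "x0 \<in> {0..<1}" and y0: "y0 \<in> {0..<1}" and "star x0 y0 < s"
    and f_levels: "\<And>p. x0 < p \<Longrightarrow> m {x\<in>space M. p \<le> f x} \<le> A"
    and g_levels: "\<And>q. y0 < q \<Longrightarrow> m {x\<in>space M. q \<le> g x} \<le> A"
  shows "m {x\<in>space M. s \<le> star (f x) (g x)} \<le> A"
proof -
  obtain p q where p: "x0 < p" "p \<le> 1" and q: "y0 < q" "q \<le> 1" and "star p q < s"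
    using continuous_on_unit_square_less_above[OF star_cont x0 y0 \<open>star x0 y0 < s\<close>] .
  define E where "E = {x\<in>space M. s \<le> star (f x) (g x)}"
  define F where "F = {x\<in>space M. p \<le> f x}"
  define G where "G = {x\<in>space M. q \<le> g x}"
  have "E \<subseteq> F \<union> G"
  proof
    fix x assume "x \<in> E"
    then have x: "x \<in> space M" and "s \<le> star (f x) (g x)" unfolding E_def by auto
    show "x \<in> F \<union> G"
    proof (rule ccontr)
      assume "x \<notin> F \<union> G"
      then have "f x \<le> p" "g x \<le> q" using x unfolding F_def G_def by auto
      moreover have "f x \<in> {0..1}" "g x \<in> {0..1}" using f g x unfolding F01_def by auto
      ultimately have "star (f x) (g x) \<le> star p q"
        using p q x0 y0 by (intro star_mono) auto
      with \<open>s \<le> star (f x) (g x)\<close> \<open>star p q < s\<close> show False by simp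
    qed
  qed
  with comonotone_level_sets_nested[OF com, of p q] have "E \<subseteq> F \<or> E \<subseteq> G"
    unfolding F_def G_def by blast
  have "f \<in> borel_measurable M" "g \<in> borel_measurable M"
    using f g unfolding F01_def by auto
  then have F: "F \<in> sets M" and G: "G \<in> sets M"
    unfolding F_def G_def by measurable
  have E: "E \<in> sets M"
    unfolding E_def using borel_measurable_continuous_on_unit_square[OF star_cont f g] by measurable
  have mono: "\<And>A B. A \<in> sets M \<Longrightarrow> B \<in> sets M \<Longrightarrow> A \<subseteq> B \<Longrightarrow> m A \<le> m B"
    using m unfolding monotone_measure_def by blast
  from \<open>E \<subseteq> F \<or> E \<subseteq> G\<close> have "m E \<le> A"
  proof
    assume "E \<subseteq> F"
    have "m E \<le> m F" by (rule mono[OF E F \<open>E \<subseteq> F\<close>])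
    also have "m F \<le> A" unfolding F_def by (rule f_levels[OF p(1)])
    finally show ?thesis .
  next
    assume "E \<subseteq> G"
    have "m E \<le> m G" by (rule mono[OF E G \<open>E \<subseteq> G\<close>])
    also have "m G \<le> A" unfolding G_def by (rule g_levels[OF q(1)])
    finally show ?thesis .
  qed
  then show ?thesis unfolding E_def .
qed

lemma sugeno_comonotone_star_powr_le:
  fixes star :: "real \<Rightarrow> real \<Rightarrow> real"
  assumes m: "monotone_measure M m" and f: "f \<in> F01 M" and g: "g \<in> F01 M"
    and com: "comonotone M f g"
    and star_cont: "continuous_on ({0..1} \<times> {0..1}) (\<lambda>(a, b). star a b)"
    and star_range: "\<And>a b. a \<in> {0..1} \<Longrightarrow> b \<in> {0..1} \<Longrightarrow> star a b \<in> {0..1}"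
    and star_mono: "\<And>a a' b b'. a \<in> {0..1} \<Longrightarrow> a' \<in> {0..1} \<Longrightarrow> b \<in> {0..1} \<Longrightarrow> b' \<in> {0..1}
                     \<Longrightarrow> a \<le> a' \<Longrightarrow> b \<le> b' \<Longrightarrow> star a b \<le> star a' b'"
    and "0 < \<alpha>" and "0 \<le> A" and x0: "x0 \<in> {0..<1}" and y0: "y0 \<in> {0..<1}"
    and f_levels: "\<And>p. x0 < p \<Longrightarrow> m {x\<in>space M. p \<le> f x} \<le> ennreal A"
    and g_levels: "\<And>q. y0 < q \<Longrightarrow> m {x\<in>space M. q \<le> g x} \<le> ennreal A"
  shows "sugeno M m (\<lambda>x. star (f x) (g x) powr \<alpha>) \<le> ennreal (max A (star x0 y0 powr \<alpha>))"
proof -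
  have "m {} = 0" using m unfolding monotone_measure_def by simp
  have star_nonneg: "\<And>x. x \<in> space M \<Longrightarrow> 0 \<le> star (f x) (g x)"
    using f g star_range unfolding F01_def by (simp add: atLeastAtMost_iff)
  have "star x0 y0 \<ge> 0" using x0 y0 star_range by auto
  have nonneg: "0 \<le> max A (star x0 y0 powr \<alpha>)" using \<open>0 \<le> A\<close> by simp
  have levels: "\<forall>s > max A (star x0 y0 powr \<alpha>).
      m {x\<in>space M. s \<le> star (f x) (g x) powr \<alpha>} \<le> ennreal (max A (star x0 y0 powr \<alpha>))"
  proof (intro allI impI)
    fix s assume "max A (star x0 y0 powr \<alpha>) < s"
    then have "0 < s" and "star x0 y0 powr \<alpha> < s" using \<open>0 \<le> A\<close> by auto
    have "star x0 y0 = (star x0 y0 powr \<alpha>) powr (1 / \<alpha>)"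
      using \<open>0 < \<alpha>\<close> \<open>star x0 y0 \<ge> 0\<close> by (simp add: powr_powr)
    also have "\<dots> < s powr (1 / \<alpha>)"
      using \<open>0 < \<alpha>\<close> \<open>star x0 y0 powr \<alpha> < s\<close> by (intro powr_less_mono2) auto
    finally have "m {x\<in>space M. s powr (1 / \<alpha>) \<le> star (f x) (g x)} \<le> ennreal A"
      using comonotone_star_level_le[OF m f g com star_cont star_mono x0 y0 _ f_levels g_levels]
      by simp
    moreover have "{x\<in>space M. s powr (1 / \<alpha>) \<le> star (f x) (g x)}
        = {x\<in>space M. s \<le> star (f x) (g x) powr \<alpha>}"
    proof -
      have iff: "s powr (1 / \<alpha>) \<le> k \<longleftrightarrow> s \<le> k powr \<alpha>" if "0 \<le> k" for k
        using powr_le_powr_iff[of "s powr (1 / \<alpha>)" k \<alpha>] that \<open>0 < \<alpha>\<close> \<open>0 < s\<close>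
        by (simp add: powr_powr)
      show ?thesis
        by (rule Collect_cong, rule conj_cong, rule refl, rule iff, erule star_nonneg)
    qed
    ultimately have "m {x\<in>space M. s \<le> star (f x) (g x) powr \<alpha>} \<le> ennreal A"
      by simp
    then show "m {x\<in>space M. s \<le> star (f x) (g x) powr \<alpha>} \<le> ennreal (max A (star x0 y0 powr \<alpha>))"
      by (rule order_trans) (intro ennreal_leI max.cobounded1)
  qed
  show ?thesis
    by (rule sugeno_le_ennreal_iff[of m _ M, THEN iffD2, OF \<open>m {} = 0\<close> nonneg levels])
qed

lemma sugeno_comonotone_star_powr_le_sugeno_powr:
  fixes star :: "real \<Rightarrow> real \<Rightarrow> real"
  assumes m: "monotone_measure M m" and f: "f \<in> F01 M" and g: "g \<in> F01 M"
    and com: "comonotone M f g"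
    and star_cont: "continuous_on ({0..1} \<times> {0..1}) (\<lambda>(a, b). star a b)"
    and star_range: "\<And>a b. a \<in> {0..1} \<Longrightarrow> b \<in> {0..1} \<Longrightarrow> star a b \<in> {0..1}"
    and star_mono: "\<And>a a' b b'. a \<in> {0..1} \<Longrightarrow> a' \<in> {0..1} \<Longrightarrow> b \<in> {0..1} \<Longrightarrow> b' \<in> {0..1}
                     \<Longrightarrow> a \<le> a' \<Longrightarrow> b \<le> b' \<Longrightarrow> star a b \<le> star a' b'"
    and "0 < \<alpha>" and "0 < \<beta>" and "0 < \<gamma>"
    and a: "a \<in> {0..<1}" and Sf: "sugeno M m (\<lambda>x. f x powr \<beta>) \<le> ennreal a"
    and b: "b \<in> {0..<1}" and Sg: "sugeno M m (\<lambda>x. g x powr \<gamma>) \<le> ennreal b"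
  shows "sugeno M m (\<lambda>x. star (f x) (g x) powr \<alpha>)
           \<le> ennreal (max (max a b) (star (a powr (1 / \<beta>)) (b powr (1 / \<gamma>)) powr \<alpha>))"
proof (rule sugeno_comonotone_star_powr_le[OF m f g com star_cont star_range star_mono \<open>0 < \<alpha>\<close>])
  have "m {} = 0" using m unfolding monotone_measure_def by simp
  show "a powr (1 / \<beta>) \<in> {0..<1}" "b powr (1 / \<gamma>) \<in> {0..<1}"
    using a b \<open>0 < \<beta>\<close> \<open>0 < \<gamma>\<close> powr_less_mono2[of "1 / \<beta>" a 1] powr_less_mono2[of "1 / \<gamma>" b 1]
    by auto
  show "m {x\<in>space M. p \<le> f x} \<le> ennreal (max a b)" if "a powr (1 / \<beta>) < p" for p
  proof -
    have "m {x\<in>space M. p \<le> f x} \<le> ennreal a"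
      using level_le_sugeno_powr[OF \<open>m {} = 0\<close> \<open>0 < \<beta>\<close> _ Sf _ that] f a unfolding F01_def by auto
    then show ?thesis by (rule order_trans) (intro ennreal_leI max.cobounded1)
  qed
  show "m {x\<in>space M. q \<le> g x} \<le> ennreal (max a b)" if "b powr (1 / \<gamma>) < q" for q
  proof -
    have "m {x\<in>space M. q \<le> g x} \<le> ennreal b"
      using level_le_sugeno_powr[OF \<open>m {} = 0\<close> \<open>0 < \<gamma>\<close> _ Sg _ that] g b unfolding F01_def by auto
    then show ?thesis by (rule order_trans) (intro ennreal_leI max.cobounded2)
  qed
qed (use a in auto)

lemma powr_le_star_powr:
  fixes star :: "real \<Rightarrow> real \<Rightarrow> real"
  assumes star_range: "\<And>a b. a \<in> {0..1} \<Longrightarrow> b \<in> {0..1} \<Longrightarrow> star a b \<in> {0..1}"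
    and star_mono: "\<And>a a' b b'. a \<in> {0..1} \<Longrightarrow> a' \<in> {0..1} \<Longrightarrow> b \<in> {0..1} \<Longrightarrow> b' \<in> {0..1}
                     \<Longrightarrow> a \<le> a' \<Longrightarrow> b \<le> b' \<Longrightarrow> star a b \<le> star a' b'"
    and star_max: "\<And>a b. a \<in> {0..1} \<Longrightarrow> b \<in> {0..1} \<Longrightarrow> max a b \<le> star a b"
    and a: "a \<in> {0..1}" and b: "b \<in> {0..1}" and L: "L \<in> {0..1}"
    and "0 < \<alpha>" "0 < \<beta>" "0 < \<gamma>" "0 < lam" "0 < \<upsilon>" "0 < \<tau>"
    and "1 \<le> \<alpha> * lam" "\<beta> * \<upsilon> \<le> 1" "\<gamma> * \<tau> \<le> 1" "\<tau> \<le> lam" "\<upsilon> \<le> lam"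
    and L_le: "a < 1 \<Longrightarrow> b < 1 \<Longrightarrow> L \<le> max (max a b) (star (a powr (1 / \<beta>)) (b powr (1 / \<gamma>)) powr \<alpha>)"
  shows "L powr lam \<le> star (a powr \<upsilon>) (b powr \<tau>)"
proof -
  define c where "c = star (a powr \<upsilon>) (b powr \<tau>)"
  have "a powr \<upsilon> \<in> {0..1}" "b powr \<tau> \<in> {0..1}"
    using a b \<open>0 < \<upsilon>\<close> \<open>0 < \<tau>\<close> by (auto intro: powr_le1)
  then have c: "a powr \<upsilon> \<le> c" "b powr \<tau> \<le> c"
    using star_max unfolding c_def by fastforce+
  show "L powr lam \<le> c"
  proof (cases "a < 1 \<and> b < 1")
    case True
    define x0 where "x0 = a powr (1 / \<beta>)"
    define y0 where "y0 = b powr (1 / \<gamma>)"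
    have "L powr lam \<le> max (max a b) (star x0 y0 powr \<alpha>) powr lam"
      using L_le True L \<open>0 < lam\<close> unfolding x0_def y0_def by (intro powr_mono2) auto
    moreover have "a powr lam \<le> c"
      using a \<open>\<upsilon> \<le> lam\<close> c(1) by (meson atLeastAtMost_iff powr_mono' order_trans)
    moreover have "b powr lam \<le> c"
      using b \<open>\<tau> \<le> lam\<close> c(2) by (meson atLeastAtMost_iff powr_mono' order_trans)
    moreover have "(star x0 y0 powr \<alpha>) powr lam \<le> c"
    proof -
      have x0: "x0 \<in> {0..1}" "x0 \<le> a powr \<upsilon>" unfolding x0_def
        using a \<open>\<beta> * \<upsilon> \<le> 1\<close> \<open>0 < \<beta>\<close> by (auto intro: powr_le1 powr_mono' simp: field_simps)
      have y0: "y0 \<in> {0..1}" "y0 \<le> b powr \<tau>" unfolding y0_def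
        using b \<open>\<gamma> * \<tau> \<le> 1\<close> \<open>0 < \<gamma>\<close> by (auto intro: powr_le1 powr_mono' simp: field_simps)
      have "star x0 y0 \<in> {0..1}" using star_range x0 y0 by auto
      then have "(star x0 y0 powr \<alpha>) powr lam \<le> star x0 y0"
        using \<open>1 \<le> \<alpha> * lam\<close> powr_mono'[of 1 "\<alpha> * lam" "star x0 y0"] by (auto simp: powr_powr)
      also have "\<dots> \<le> c"
        unfolding c_def using x0 y0 \<open>a powr \<upsilon> \<in> {0..1}\<close> \<open>b powr \<tau> \<in> {0..1}\<close>
        by (intro star_mono) auto
      finally show ?thesis .
    qed
    ultimately show ?thesis by (auto simp: max_def split: if_splits)
  next
    case False
    then have "1 \<le> c" using a b c by auto
    moreover have "L powr lam \<le> 1" using L \<open>0 < lam\<close> by (auto intro: powr_le1)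
    ultimately show ?thesis by linarith
  qed
qed

theorem corollary4p5:
  fixes M :: "'a measure" and f g :: "'a \<Rightarrow> real" and star :: "real \<Rightarrow> real \<Rightarrow> real"
  assumes f: "f \<in> F01 M" and g: "g \<in> F01 M"
    and com: "comonotone M f g"
    and star_cont: "continuous_on ({0..1} \<times> {0..1}) (\<lambda>(a, b). star a b)"
    and star_range: "\<And>a b. a \<in> {0..1} \<Longrightarrow> b \<in> {0..1} \<Longrightarrow> star a b \<in> {0..1}"
    and star_mono: "\<And>a a' b b'. a \<in> {0..1} \<Longrightarrow> a' \<in> {0..1} \<Longrightarrow> b \<in> {0..1} \<Longrightarrow> b' \<in> {0..1}
                     \<Longrightarrow> a \<le> a' \<Longrightarrow> b \<le> b' \<Longrightarrow> star a b \<le> star a' b'"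
    and star_max: "\<And>a b. a \<in> {0..1} \<Longrightarrow> b \<in> {0..1} \<Longrightarrow> max a b \<le> star a b"
  shows "\<forall>m. monotone_measure M m \<and> m (space M) = 1 \<longrightarrow>
    (\<forall>\<alpha> \<beta> \<gamma> lam \<upsilon> \<tau> :: real.
       \<alpha> > 0 \<and> \<beta> > 0 \<and> \<gamma> > 0 \<and> lam > 0 \<and> \<upsilon> > 0 \<and> \<tau> > 0 \<and>
       1 \<le> \<alpha> * lam \<and> \<beta> * \<upsilon> \<le> 1 \<and> \<gamma> * \<tau> \<le> 1 \<and> \<tau> \<le> lam \<and> \<upsilon> \<le> lam \<longrightarrow>
       enn2real (sugeno M m (\<lambda>x. star (f x) (g x) powr \<alpha>)) powr lam
         \<le> star (enn2real (sugeno M m (\<lambda>x. f x powr \<beta>)) powr \<upsilon>)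
                (enn2real (sugeno M m (\<lambda>x. g x powr \<gamma>)) powr \<tau>))"
proof (intro allI impI)
  fix m and \<alpha> \<beta> \<gamma> lam \<upsilon> \<tau> :: real
  assume "monotone_measure M m \<and> m (space M) = 1"
  then have m: "monotone_measure M m" and "m {} = 0" unfolding monotone_measure_def by auto
  assume params: "\<alpha> > 0 \<and> \<beta> > 0 \<and> \<gamma> > 0 \<and> lam > 0 \<and> \<upsilon> > 0 \<and> \<tau> > 0 \<and>
    1 \<le> \<alpha> * lam \<and> \<beta> * \<upsilon> \<le> 1 \<and> \<gamma> * \<tau> \<le> 1 \<and> \<tau> \<le> lam \<and> \<upsilon> \<le> lam"
  have fg: "(\<lambda>x. star (f x) (g x)) \<in> F01 M"
    using F01_continuous_on_unit_square[OF star_cont star_range f g] .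
  define a where "a = enn2real (sugeno M m (\<lambda>x. f x powr \<beta>))"
  define b where "b = enn2real (sugeno M m (\<lambda>x. g x powr \<gamma>))"
  define L where "L = enn2real (sugeno M m (\<lambda>x. star (f x) (g x) powr \<alpha>))"
  have Sa: "sugeno M m (\<lambda>x. f x powr \<beta>) = ennreal a" and a: "a \<in> {0..1}"
    using sugeno_powr_eq_ennreal_enn2real[of m, OF \<open>m {} = 0\<close> f] params unfolding a_def by auto
  have Sb: "sugeno M m (\<lambda>x. g x powr \<gamma>) = ennreal b" and b: "b \<in> {0..1}"
    using sugeno_powr_eq_ennreal_enn2real[of m, OF \<open>m {} = 0\<close> g] params unfolding b_def by auto
  have SL: "sugeno M m (\<lambda>x. star (f x) (g x) powr \<alpha>) = ennreal L" and L: "L \<in> {0..1}"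
    using sugeno_powr_eq_ennreal_enn2real[of m, OF \<open>m {} = 0\<close> fg] params unfolding L_def by auto
  have "L powr lam \<le> star (a powr \<upsilon>) (b powr \<tau>)"
  proof (rule powr_le_star_powr[OF star_range star_mono star_max a b L])
    assume "a < 1" "b < 1"
    with a b params have "sugeno M m (\<lambda>x. star (f x) (g x) powr \<alpha>)
        \<le> ennreal (max (max a b) (star (a powr (1 / \<beta>)) (b powr (1 / \<gamma>)) powr \<alpha>))"
      by (intro sugeno_comonotone_star_powr_le_sugeno_powr[OF m f g com star_cont star_range star_mono])
         (auto simp: Sa Sb)
    then show "L \<le> max (max a b) (star (a powr (1 / \<beta>)) (b powr (1 / \<gamma>)) powr \<alpha>)"
      unfolding SL using a by (subst (asm) ennreal_le_iff) (auto simp: le_max_iff_disj)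
  qed (use params in auto)
  then show "enn2real (sugeno M m (\<lambda>x. star (f x) (g x) powr \<alpha>)) powr lam
         \<le> star (enn2real (sugeno M m (\<lambda>x. f x powr \<beta>)) powr \<upsilon>)
                (enn2real (sugeno M m (\<lambda>x. g x powr \<gamma>)) powr \<tau>)"
    unfolding a_def b_def L_def .
qed

end
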